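(* Let $n, m \ge 1$. Let $F \in \mathbb{R}^{n\times n}$ (state transition matrix) and $H \in \mathbb{R}^{m\times n}$ (measurement matrix) be known, with $H$ of full row rank $m$, and let $Q \in \mathbb{R}^{n\times n}$ and $R \in \mathbb{R}^{m\times m}$ (process and measurement noise covariances) be known symmetric positive definite matrices. Let $\tilde{x}_{t-1} \in \mathbb{R}^n$ and a symmetric positive semidefinite $\tilde{P}_{t-1} \in \mathbb{R}^{n\times n}$ be the previous state estimate and covariance. Define the Kalman prediction $$\hat{x}_t = F\tilde{x}_{t-1}, \qquad \hat{P}_t = F\tilde{P}_{t-1}F^T + Q,$$ and, for an observed measurement $\hat{z}_t \in \mathbb{R}^m$, the Kalman update $$K_t = \hat{P}_t H^T (H\hat{P}_t H^T + R)^{-1}, \qquad \tilde{x}_t = \hat{x}_t + K_t(\hat{z}_t - H\hat{x}_t), \qquad \tilde{P}_t = (I - K_t H)\hat{P}_t .$$ Consider the a-priori distribution $\mathcal{N}(\hat{x}_t, \hat{P}_t)$ and the a-posteriori distribution $\mathcal{N}(\tilde{x}_t, \tilde{P}_t)$ on $\mathbb{R}^n$, and the function $$D(\hat{z}_t) = D_{KL}\big(\mathcal{N}(\hat{x}_t,\hat{P}_t)\,\|\,\mathcal{N}(\tilde{x}_t,\tilde{P}_t)\big).$$ Then minimizing the residual $\|\hat{z}_t - H\hat{x}_t\|_2$ over $\hat{z}_t \in \mathbb{R}^m$ is equivalent to minimizing $D(\hat{z}_t)$ over $\hat{z}_t \in \mathbb{R}^m$; that is, the set of minimizers of $\hat{z}_t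 \mapsto \|\hat{z}_t - H\hat{x}_t\|_2$ coincides with the set of minimizers of $\hat{z}_t \mapsto D(\hat{z}_t)$.
   Context: $D_{KL}(p\|q) = \mathbb{E}_{p}[\log p - \log q]$ denotes the Kullback–Leibler divergence; for Gaussians on $\mathbb{R}^n$, $D_{KL}(\mathcal{N}(\mu_0,\Sigma_0)\|\mathcal{N}(\mu_1,\Sigma_1)) = \tfrac12\big(\log\frac{\det\Sigma_1}{\det\Sigma_0} - n + \mathrm{tr}(\Sigma_1^{-1}\Sigma_0) + (\mu_1-\mu_0)^T\Sigma_1^{-1}(\mu_1-\mu_0)\big)$. The setting is the linear Kalman filter model $x_t = Fx_{t-1} + \omega$, $\omega \sim \mathcal{N}(0,Q)$, $z_t = Hx_t + \nu$, $\nu \sim \mathcal{N}(0,R)$. *)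

theory Defs
  imports "HOL-Analysis.Analysis"
begin

definition sym_pos_def_mat :: "real^'n^'n \<Rightarrow> bool" where
  "sym_pos_def_mat A \<longleftrightarrow> transpose A = A \<and> (\<forall>x. x \<noteq> 0 \<longrightarrow> x \<bullet> (A *v x) > 0)"

definition sym_pos_semidef_mat :: "real^'n^'n \<Rightarrow> bool" where
  "sym_pos_semidef_mat A \<longleftrightarrow> transpose A = A \<and> (\<forall>x. x \<bullet> (A *v x) \<ge> 0)"

definition gauss_KL :: "real^'n \<Rightarrow> real^'n^'n \<Rightarrow> real^'n \<Rightarrow> real^'n^'n \<Rightarrow> real" where
  "gauss_KL mu0 S0 mu1 S1 =
     (ln (det S1 / det S0) - real CARD('n) + trace (matrix_inv S1 ** S0)
      + (mu1 - mu0) \<bullet> (matrix_inv S1 *v (mu1 - mu0))) / 2"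

definition kf_pred_mean :: "real^'n^'n \<Rightarrow> real^'n \<Rightarrow> real^'n" where
  "kf_pred_mean F x = F *v x"

definition kf_pred_cov :: "real^'n^'n \<Rightarrow> real^'n^'n \<Rightarrow> real^'n^'n \<Rightarrow> real^'n^'n" where
  "kf_pred_cov F P Q = F ** P ** transpose F + Q"

definition kf_gain :: "real^'n^'n \<Rightarrow> real^'n^'m \<Rightarrow> real^'m^'m \<Rightarrow> real^'m^'n" where
  "kf_gain P H R = P ** transpose H ** matrix_inv (H ** P ** transpose H + R)"

definition kf_upd_mean :: "real^'n \<Rightarrow> real^'n^'n \<Rightarrow> real^'n^'m \<Rightarrow> real^'m^'m \<Rightarrow> real^'m \<Rightarrow> real^'n" where
  "kf_upd_mean xh P H R z = xh + kf_gain P H R *v (z - H *v xh)"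

definition kf_upd_cov :: "real^'n^'n \<Rightarrow> real^'n^'m \<Rightarrow> real^'m^'m \<Rightarrow> real^'n^'n" where
  "kf_upd_cov P H R = (mat 1 - kf_gain P H R ** H) ** P"

definition minimizers :: "('a \<Rightarrow> real) \<Rightarrow> 'a set" where
  "minimizers f = {z. \<forall>z'. f z \<le> f z'}"

end

theory Submission
  imports Defs
begin

text \<open>The updated mean depends on the measurement z only through the residual r = z - H xh,
  and z enters the divergence only through the Mahalanobis term (K r)' Pt^-1 (K r) / 2; the
  determinant and trace terms do not involve z. The posterior covariance
  Pt = Ph - Ph H' S^-1 H Ph, with S = H Ph H' + R, is positive definite (a Schur complement
  argument using R > 0), and the gain K = Ph H' S^-1 is injective because H has full row rank.
  So the Mahalanobis term is a positive definite quadratic form in r, and both objectives have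
  the unique minimizer z = H xh.\<close>

declare transpose_matrix_vector [simp del] vector_transpose_matrix [simp del]

lemma inner_matrix_vector_transpose:
  "x \<bullet> ((A::real^'n^'m) *v y) = (transpose A *v x) \<bullet> y"
  by (simp add: dot_lmul_matrix transpose_matrix_vector)

lemma transpose_add: "transpose (A + B) = transpose A + transpose (B::'a::semiring_1^'n^'m)"
  by (simp add: transpose_def vec_eq_iff)

lemma matrix_inv_right:
  fixes A :: "'a::semiring_1^'n^'m"
  assumes "invertible A"
  shows "A ** matrix_inv A = mat 1"
proof -
  have "\<exists>A'. A ** A' = mat 1 \<and> A' ** A = mat 1"
    using assms unfolding invertible_def by blast
  then have "A ** matrix_inv A = mat 1 \<and> matrix_inv A ** A = mat 1"
    unfolding matrix_inv_def by (rule someI_ex)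
  then show ?thesis ..
qed

definition pos_def_mat :: "real^'n^'n \<Rightarrow> bool" where
  "pos_def_mat A \<longleftrightarrow> (\<forall>x. x \<noteq> 0 \<longrightarrow> 0 < x \<bullet> (A *v x))"

definition pos_semidef_mat :: "real^'n^'n \<Rightarrow> bool" where
  "pos_semidef_mat A \<longleftrightarrow> (\<forall>x. 0 \<le> x \<bullet> (A *v x))"

lemma sym_pos_def_mat_iff: "sym_pos_def_mat A \<longleftrightarrow> transpose A = A \<and> pos_def_mat A"
  by (simp add: sym_pos_def_mat_def pos_def_mat_def)

lemma sym_pos_semidef_mat_iff: "sym_pos_semidef_mat A \<longleftrightarrow> transpose A = A \<and> pos_semidef_mat A"
  by (simp add: sym_pos_semidef_mat_def pos_semidef_mat_def)

lemma pos_def_mat_imp_pos_semidef_mat: "pos_def_mat A \<Longrightarrow> pos_semidef_mat A"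
  unfolding pos_def_mat_def pos_semidef_mat_def
  by (metis inner_zero_left less_eq_real_def)

lemma pos_semidef_mat_congruence:
  fixes A :: "real^'n^'m"
  assumes "pos_semidef_mat P"
  shows "pos_semidef_mat (A ** P ** transpose A)"
  unfolding pos_semidef_mat_def
proof
  fix x :: "real^'m"
  have "x \<bullet> ((A ** P ** transpose A) *v x) = (transpose A *v x) \<bullet> (P *v (transpose A *v x))"
    by (simp add: inner_matrix_vector_transpose flip: matrix_vector_mul_assoc)
  then show "0 \<le> x \<bullet> ((A ** P ** transpose A) *v x)"
    using assms unfolding pos_semidef_mat_def by simp
qed

lemma pos_semidef_mat_add_pos_def_mat:
  "pos_semidef_mat A \<Longrightarrow> pos_def_mat B \<Longrightarrow> pos_def_mat (A + B)"
  unfolding pos_semidef_mat_def pos_def_mat_def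
  by (simp add: matrix_vector_mult_add_rdistrib inner_add_right add_nonneg_pos)

lemma pos_def_mat_invertible:
  assumes "pos_def_mat A"
  shows "invertible A"
proof -
  have "inj ((*v) A)"
  proof (rule injI)
    fix x y
    assume "A *v x = A *v y"
    then have "(x - y) \<bullet> (A *v (x - y)) = 0"
      by (simp add: matrix_vector_mult_diff_distrib)
    then show "x = y"
      using assms unfolding pos_def_mat_def by (metis eq_iff_diff_eq_0 less_irrefl)
  qed
  then show ?thesis
    using matrix_left_invertible_injective invertible_left_inverse by blast
qed

lemma pos_def_mat_matrix_inv:
  fixes A :: "real^'n^'n"
  assumes "pos_def_mat A"
  shows "pos_def_mat (matrix_inv A)"
  unfolding pos_def_mat_def
proof (intro allI impI)
  fix y :: "real^'n"
  assume "y \<noteq> 0"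
  define x where "x = matrix_inv A *v y"
  have y: "y = A *v x"
    unfolding x_def
    by (simp add: matrix_vector_mul_assoc matrix_inv_right[OF pos_def_mat_invertible[OF assms]])
  with \<open>y \<noteq> 0\<close> have "x \<noteq> 0" by auto
  then have "0 < x \<bullet> (A *v x)"
    using assms unfolding pos_def_mat_def by blast
  moreover have "y \<bullet> (matrix_inv A *v y) = (A *v x) \<bullet> x"
    by (subst x_def[symmetric]) (simp add: y)
  ultimately show "0 < y \<bullet> (matrix_inv A *v y)"
    by (simp add: inner_commute)
qed

lemma kf_pred_cov_sym_pos_def:
  assumes "sym_pos_semidef_mat P" and "sym_pos_def_mat Q"
  shows "sym_pos_def_mat (kf_pred_cov F P Q)"
proof -
  have "transpose P = P" "pos_semidef_mat P" "transpose Q = Q" "pos_def_mat Q"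
    using assms by (simp_all add: sym_pos_def_mat_iff sym_pos_semidef_mat_iff)
  then show ?thesis
    unfolding sym_pos_def_mat_iff kf_pred_cov_def
    by (simp add: transpose_add matrix_transpose_mul matrix_mul_assoc
        pos_semidef_mat_add_pos_def_mat pos_semidef_mat_congruence)
qed

definition kf_innov_cov :: "real^'n^'n \<Rightarrow> real^'n^'m \<Rightarrow> real^'m^'m \<Rightarrow> real^'m^'m" where
  "kf_innov_cov P H R = H ** P ** transpose H + R"

lemma kf_gain_innov_cov: "kf_gain P H R = P ** transpose H ** matrix_inv (kf_innov_cov P H R)"
  by (simp add: kf_gain_def kf_innov_cov_def)

lemma kf_innov_cov_pos_def:
  "pos_semidef_mat P \<Longrightarrow> pos_def_mat R \<Longrightarrow> pos_def_mat (kf_innov_cov P H R)"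
  unfolding kf_innov_cov_def
  by (simp add: pos_semidef_mat_add_pos_def_mat pos_semidef_mat_congruence)

lemma kf_gain_injective:
  fixes H :: "real^'n^'m"
  assumes "pos_def_mat P" and "pos_def_mat R" and "rank H = CARD('m)"
  shows "inj ((*v) (kf_gain P H R))"
proof -
  have "invertible (matrix_inv (kf_innov_cov P H R))"
    using kf_innov_cov_pos_def pos_def_mat_matrix_inv pos_def_mat_invertible
      pos_def_mat_imp_pos_semidef_mat assms(1,2) by blast
  moreover have "inj ((*v) (transpose H))"
    using assms(3) full_rank_injective rank_transpose by metis
  moreover have "inj ((*v) P)"
    using pos_def_mat_invertible[OF assms(1)] inj_matrix_vector_mult by blast
  ultimately have "inj ((*v) P \<circ> (*v) (transpose H) \<circ> (*v) (matrix_inv (kf_innov_cov P H R)))"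
    using inj_matrix_vector_mult by (blast intro: inj_compose)
  then show ?thesis
    by (simp add: kf_gain_innov_cov comp_def matrix_vector_mul_assoc)
qed

text \<open>Completing the square in the direction w = H' v: the Schur complement estimate behind
  the positive definiteness of the posterior covariance.\<close>
lemma kf_schur_complement_bound:
  fixes H :: "real^'n^'m"
  assumes "transpose P = P" and "pos_semidef_mat P"
    and v: "kf_innov_cov P H R *v v = H *v (P *v x)"
  shows "(H *v (P *v x)) \<bullet> v + v \<bullet> (R *v v) \<le> x \<bullet> (P *v x)"
proof -
  define w where "w = transpose H *v v"
  have P_sym: "a \<bullet> (P *v b) = b \<bullet> (P *v a)" for a b
    by (metis assms(1) inner_matrix_vector_transpose inner_commute)
  have xPw: "x \<bullet> (P *v w) = (H *v (P *v x)) \<bullet> v"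
    by (metis P_sym w_def inner_matrix_vector_transpose inner_commute transpose_transpose)
  have "w \<bullet> (P *v w) = v \<bullet> (H *v (P *v w))"
    by (metis w_def inner_matrix_vector_transpose inner_commute transpose_transpose)
  also have "H *v (P *v w) = H *v (P *v x) - R *v v"
    using v by (simp add: kf_innov_cov_def w_def matrix_vector_mult_add_rdistrib eq_diff_eq
        flip: matrix_vector_mul_assoc)
  finally have wPw: "w \<bullet> (P *v w) = (H *v (P *v x)) \<bullet> v - v \<bullet> (R *v v)"
    by (simp add: inner_diff_right inner_commute)
  have "0 \<le> (x - w) \<bullet> (P *v (x - w))"
    using assms(2) unfolding pos_semidef_mat_def by blast
  also have "\<dots> = x \<bullet> (P *v x) - 2 * (x \<bullet> (P *v w)) + w \<bullet> (P *v w)"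
    using P_sym[of w x]
    by (simp add: matrix_vector_mult_diff_distrib inner_diff_left inner_diff_right)
  finally show ?thesis
    using xPw wPw by linarith
qed

lemma kf_upd_cov_pos_def:
  fixes P :: "real^'n^'n" and H :: "real^'n^'m"
  assumes "transpose P = P" and "pos_def_mat P" and "pos_def_mat R"
  shows "pos_def_mat (kf_upd_cov P H R)"
  unfolding pos_def_mat_def
proof (intro allI impI)
  fix x :: "real^'n"
  assume "x \<noteq> 0"
  define u where "u = H *v (P *v x)"
  define v where "v = matrix_inv (kf_innov_cov P H R) *v u"
  have "invertible (kf_innov_cov P H R)"
    using assms(2,3) by (simp add: kf_innov_cov_pos_def pos_def_mat_imp_pos_semidef_mat
        pos_def_mat_invertible)
  then have Sv: "kf_innov_cov P H R *v v = u"
    by (simp add: v_def matrix_vector_mul_assoc matrix_inv_right)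
  have "x \<bullet> (kf_upd_cov P H R *v x) = x \<bullet> (P *v x) - x \<bullet> (P *v (transpose H *v v))"
    by (simp add: kf_upd_cov_def kf_gain_innov_cov u_def v_def matrix_vector_mult_diff_rdistrib
        inner_diff_right flip: matrix_vector_mul_assoc)
  also have "x \<bullet> (P *v (transpose H *v v)) = u \<bullet> v"
    by (metis assms(1) u_def inner_matrix_vector_transpose inner_commute transpose_transpose)
  finally have upd: "x \<bullet> (kf_upd_cov P H R *v x) = x \<bullet> (P *v x) - u \<bullet> v" .
  have bound: "u \<bullet> v + v \<bullet> (R *v v) \<le> x \<bullet> (P *v x)"
    using kf_schur_complement_bound[OF assms(1) pos_def_mat_imp_pos_semidef_mat[OF assms(2)]]
      Sv by (simp add: u_def)
  show "0 < x \<bullet> (kf_upd_cov P H R *v x)"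
  proof (cases "v = 0")
    case True
    then show ?thesis
      using assms(2) \<open>x \<noteq> 0\<close> by (simp add: upd pos_def_mat_def)
  next
    case False
    then have "0 < v \<bullet> (R *v v)"
      using assms(3) unfolding pos_def_mat_def by blast
    then show ?thesis
      using bound by (simp add: upd)
  qed
qed

lemma gauss_KL_eq_same_mean_plus:
  "gauss_KL mu0 S0 mu1 S1
     = gauss_KL mu0 S0 mu0 S1 + (mu1 - mu0) \<bullet> (matrix_inv S1 *v (mu1 - mu0)) / 2"
  by (simp add: gauss_KL_def add_divide_distrib)

lemma kf_upd_mean_diff: "kf_upd_mean xh P H R z - xh = kf_gain P H R *v (z - H *v xh)"
  by (simp add: kf_upd_mean_def)

lemma minimizers_eq_singleton:
  assumes "\<And>z. z \<noteq> c \<Longrightarrow> f c < f z"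
  shows "minimizers f = {c}"
proof -
  have "f c \<le> f z" for z
    using assms[of z] by (cases "z = c") auto
  moreover have "\<not> (\<forall>z'. f z \<le> f z')" if "z \<noteq> c" for z
    using assms[OF that] not_le by blast
  ultimately show ?thesis
    unfolding minimizers_def by blast
qed

theorem theorem1:
  fixes F :: "real^'n^'n" and H :: "real^'n^'m"
    and Q :: "real^'n^'n" and R :: "real^'m^'m"
    and x_prev :: "real^'n" and P_prev :: "real^'n^'n"
  assumes "rank H = CARD('m)"
    and "sym_pos_def_mat Q" and "sym_pos_def_mat R"
    and "sym_pos_semidef_mat P_prev"
  defines "xh \<equiv> kf_pred_mean F x_prev"
    and "Ph \<equiv> kf_pred_cov F P_prev Q"
  shows "minimizers (\<lambda>z::real^'m. norm (z - H *v xh))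
       = minimizers (\<lambda>z::real^'m. gauss_KL xh Ph (kf_upd_mean xh Ph H R z) (kf_upd_cov Ph H R))"
proof -
  have Ph: "transpose Ph = Ph" "pos_def_mat Ph"
    using kf_pred_cov_sym_pos_def[OF assms(4,2)] by (simp_all add: Ph_def sym_pos_def_mat_iff)
  have R: "pos_def_mat R"
    using assms(3) by (simp add: sym_pos_def_mat_iff)
  define K where "K = kf_gain Ph H R"
  define M where "M = matrix_inv (kf_upd_cov Ph H R)"
  have "inj ((*v) K)"
    unfolding K_def using kf_gain_injective[OF Ph(2) R assms(1)] .
  moreover have "pos_def_mat M"
    unfolding M_def using pos_def_mat_matrix_inv kf_upd_cov_pos_def Ph R by blast
  ultimately have mahalanobis_pos: "0 < (K *v r) \<bullet> (M *v (K *v r))" if "r \<noteq> 0" for r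
    using that unfolding pos_def_mat_def by (metis injD matrix_vector_mult_0_right)
  have KL: "gauss_KL xh Ph (kf_upd_mean xh Ph H R z) (kf_upd_cov Ph H R)
      = gauss_KL xh Ph xh (kf_upd_cov Ph H R)
        + (K *v (z - H *v xh)) \<bullet> (M *v (K *v (z - H *v xh))) / 2" for z
    by (subst gauss_KL_eq_same_mean_plus) (simp only: kf_upd_mean_diff K_def M_def)
  have "minimizers (\<lambda>z::real^'m. norm (z - H *v xh)) = {H *v xh}"
    by (rule minimizers_eq_singleton) simp
  moreover have "minimizers (\<lambda>z. gauss_KL xh Ph (kf_upd_mean xh Ph H R z) (kf_upd_cov Ph H R))
      = {H *v xh}"
    unfolding KL by (rule minimizers_eq_singleton) (simp add: mahalanobis_pos)
  ultimately show ?thesis by simp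
qed

end
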